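(* Let $d\colon A\to B$ be a homomorphism of abelian groups. The ring homomorphism $q\colon Q(d)\to\operatorname{End}(d)$ restricts to an isomorphism of partially ordered sets $\operatorname{Id}_0(d)\xrightarrow{\sim}\operatorname{Prj}(d)$ that respects the action of $\operatorname{Aut}(d)$. Its inverse sends $e=(e_A,e_B)\in\operatorname{Prj}(d)$ to the homomorphism $B=\ker(e_B)\oplus\operatorname{im}(e_B)\to A$ that is zero on $\ker(e_B)$ and on $\operatorname{im}(e_B)$ equals the inverse of the isomorphism $\operatorname{im}(e_A)\to\operatorname{im}(e_B)$ obtained by restricting $d$.
   Context: $\operatorname{End}(d)$ is the ring of pairs $(\alpha,\beta)\in\operatorname{End}(A)\times\operatorname{End}(B)$ with $\beta d=d\alpha$ (componentwise operations); $\operatorname{Aut}(d)$ is its unit group. $Q(d)=\mathbb{Z}\oplus\operatorname{Hom}(B,A)$ is the ring with multiplication $(m,f)\star(n,g)=(mn,\,mg+nf+f\circ d\circ g)$ and unit $(1,0)$; $q\colon Q(d)\to\operatorname{End}(d)$ is the ring homomorphism sending $1$ to the identity and $f\in\operatorname{Hom}(B,A)$ to $(f\circ d,\,d\circ f)$. $\operatorname{Id}_0(d)=\{f\in\operatorname{Hom}(B,A): f d f=f\}$, partially ordered by $f\leq g$ iff $f\star g=g\star f=f$. For an idempotent $e=(e_A,e_B)\in\operatorname{End}(d)$, $\operatorname{im}(e)$ denotes the restriction $\operatorname{im}(e_A)\to\operatorname{im}(e_B)$ of $d$; $\operatorname{Prj}(d)$ is the set of idempotents $e\in\operatorname{End}(d)$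 for which $\operatorname{im}(e)$ is an isomorphism, partially ordered by $e\leq e'$ iff $ee'=e'e=e$. $\operatorname{Aut}(d)$ acts on $\operatorname{Prj}(d)$ by conjugation and on $\operatorname{Id}_0(d)$ by $(\alpha,\beta)\cdot f=\alpha\circ f\circ\beta^{-1}$. *)

theory Defs
  imports Complex_Main
begin

definition zsmul :: "int \<Rightarrow> 'a::ab_group_add \<Rightarrow> 'a" where
  "zsmul m x = (if 0 \<le> m then ((+) x ^^ nat m) 0 else - (((+) x ^^ nat (- m)) 0))"

definition End_d :: "('a::ab_group_add \<Rightarrow> 'b::ab_group_add) \<Rightarrow> (('a \<Rightarrow> 'a) \<times> ('b \<Rightarrow> 'b)) set" where
  "End_d d = {(\<alpha>, \<beta>). additive \<alpha> \<and> additive \<beta> \<and> \<beta> \<circ> d = d \<circ> \<alpha>}"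

definition end_mult :: "('a \<Rightarrow> 'a) \<times> ('b \<Rightarrow> 'b) \<Rightarrow> ('a \<Rightarrow> 'a) \<times> ('b \<Rightarrow> 'b) \<Rightarrow> ('a \<Rightarrow> 'a) \<times> ('b \<Rightarrow> 'b)" where
  "end_mult u v = (fst u \<circ> fst v, snd u \<circ> snd v)"

definition is_aut_inv :: "('a::ab_group_add \<Rightarrow> 'b::ab_group_add) \<Rightarrow> ('a \<Rightarrow> 'a) \<times> ('b \<Rightarrow> 'b) \<Rightarrow> ('a \<Rightarrow> 'a) \<times> ('b \<Rightarrow> 'b) \<Rightarrow> bool" where
  "is_aut_inv d u v \<longleftrightarrow> u \<in> End_d d \<and> v \<in> End_d d \<and> end_mult u v = (id, id) \<and> end_mult v u = (id, id)"

definition Q_d :: "('a::ab_group_add \<Rightarrow> 'b::ab_group_add) \<Rightarrow> (int \<times> ('b \<Rightarrow> 'a)) set" where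
  "Q_d d = {(m, f). additive f}"

definition Q_mult :: "('a::ab_group_add \<Rightarrow> 'b::ab_group_add) \<Rightarrow> int \<times> ('b \<Rightarrow> 'a) \<Rightarrow> int \<times> ('b \<Rightarrow> 'a) \<Rightarrow> int \<times> ('b \<Rightarrow> 'a)" where
  "Q_mult d x y = (case x of (m, f) \<Rightarrow> case y of (n, g) \<Rightarrow>
     (m * n, \<lambda>b. zsmul m (g b) + zsmul n (f b) + f (d (g b))))"

definition q_map :: "('a::ab_group_add \<Rightarrow> 'b::ab_group_add) \<Rightarrow> int \<times> ('b \<Rightarrow> 'a) \<Rightarrow> ('a \<Rightarrow> 'a) \<times> ('b \<Rightarrow> 'b)" where
  "q_map d x = (case x of (m, f) \<Rightarrow> (\<lambda>a. zsmul m a + f (d a), \<lambda>b. zsmul m b + d (f b)))"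

definition Id0 :: "('a::ab_group_add \<Rightarrow> 'b::ab_group_add) \<Rightarrow> ('b \<Rightarrow> 'a) set" where
  "Id0 d = {f. additive f \<and> f \<circ> d \<circ> f = f}"

definition le_Id0 :: "('a::ab_group_add \<Rightarrow> 'b::ab_group_add) \<Rightarrow> ('b \<Rightarrow> 'a) \<Rightarrow> ('b \<Rightarrow> 'a) \<Rightarrow> bool" where
  "le_Id0 d f g \<longleftrightarrow> Q_mult d (0, f) (0, g) = (0, f) \<and> Q_mult d (0, g) (0, f) = (0, f)"

definition Prj :: "('a::ab_group_add \<Rightarrow> 'b::ab_group_add) \<Rightarrow> (('a \<Rightarrow> 'a) \<times> ('b \<Rightarrow> 'b)) set" where
  "Prj d = {e. e \<in> End_d d \<and> end_mult e e = e \<and> bij_betw d (range (fst e)) (range (snd e))}"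

definition le_Prj :: "('a \<Rightarrow> 'a) \<times> ('b \<Rightarrow> 'b) \<Rightarrow> ('a \<Rightarrow> 'a) \<times> ('b \<Rightarrow> 'b) \<Rightarrow> bool" where
  "le_Prj e e' \<longleftrightarrow> end_mult e e' = e \<and> end_mult e' e = e"

definition act_Prj :: "('a \<Rightarrow> 'a) \<times> ('b \<Rightarrow> 'b) \<Rightarrow> ('a \<Rightarrow> 'a) \<times> ('b \<Rightarrow> 'b) \<Rightarrow> ('a \<Rightarrow> 'a) \<times> ('b \<Rightarrow> 'b) \<Rightarrow> ('a \<Rightarrow> 'a) \<times> ('b \<Rightarrow> 'b)" where
  "act_Prj u v e = end_mult (end_mult u e) v"

definition act_Id0 :: "('a \<Rightarrow> 'a) \<times> ('b \<Rightarrow> 'b) \<Rightarrow> ('a \<Rightarrow> 'a) \<times> ('b \<Rightarrow> 'b) \<Rightarrow> ('b \<Rightarrow> 'a) \<Rightarrow> ('b \<Rightarrow> 'a)" where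
  "act_Id0 u v f = fst u \<circ> f \<circ> snd v"

text \<open>The claimed inverse: B = ker(e_B) (+) im(e_B) \<rightarrow> A, zero on ker(e_B) and the inverse of
  d restricted to im(e_A) \<rightarrow> im(e_B) on im(e_B); i.e. b \<mapsto> (d|im e_A)^{-1}(e_B b).\<close>
definition prj_inv :: "('a::ab_group_add \<Rightarrow> 'b::ab_group_add) \<Rightarrow> ('a \<Rightarrow> 'a) \<times> ('b \<Rightarrow> 'b) \<Rightarrow> ('b \<Rightarrow> 'a)" where
  "prj_inv d e = (\<lambda>b. the_inv_into (range (fst e)) d (snd e b))"

end

theory Submission
  imports Defs
begin

text \<open>On elements (0, f) of Q(d) one has q(f) = (f d, d f) and f \<star> g = f d g. For
  f \<in> Id0(d), the identity f d f = f makes both components of q(f) idempotent and shows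
  that d maps im(f d) = im(f) bijectively onto im(d f), with inverse f. Conversely, for
  e \<in> Prj(d) the map h = prj_inv d e satisfies d h = e_B and h d = e_A, since d is injective
  on im(e_A); these two identities give h d h = h and q(h) = e. Comparing the orders only
  requires cancelling d, which f d f = f allows.\<close>

lemma q_map_zero: "q_map d (0, f) = (f \<circ> d, d \<circ> f)"
  by (simp add: q_map_def zsmul_def o_def)

lemma Q_mult_zero: "Q_mult d (0, f) (0, g) = (0, f \<circ> d \<circ> g)"
  by (simp add: Q_mult_def zsmul_def o_def)

lemma Id0_additive: "f \<in> Id0 d \<Longrightarrow> additive f"
  by (simp add: Id0_def)

lemma Id0_idem: "f \<in> Id0 d \<Longrightarrow> f (d (f b)) = f b"
  by (simp add: Id0_def fun_eq_iff)

lemma idem_fixes_range: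
  assumes "g \<circ> g = g" and "x \<in> range g"
  shows "g x = x"
  using assms by (metis comp_apply rangeE)

lemma Id0_range_comp: "f \<in> Id0 d \<Longrightarrow> range (f \<circ> d) = range f"
  by (auto simp: image_iff) (metis Id0_idem)

lemma Id0_inj_on_range:
  assumes "f \<in> Id0 d"
  shows "inj_on d (range f)"
proof (rule inj_onI)
  fix x y assume "x \<in> range f" "y \<in> range f" "d x = d y"
  then show "x = y" using Id0_idem[OF assms] by (metis rangeE)
qed

lemma Id0_bij_betw_range:
  assumes "f \<in> Id0 d"
  shows "bij_betw d (range (f \<circ> d)) (range (d \<circ> f))"
proof -
  have "d ` range f = range (d \<circ> f)"
    by (simp add: image_comp)
  then show ?thesis
    unfolding bij_betw_def Id0_range_comp[OF assms] using Id0_inj_on_range[OF assms] by simp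
qed

lemma q_map_Id0_in_Prj:
  assumes "additive d" and f: "f \<in> Id0 d"
  shows "q_map d (0, f) \<in> Prj d"
proof -
  have "additive (f \<circ> d)" "additive (d \<circ> f)"
    using Id0_additive[OF f] assms(1) by (auto simp: additive_def)
  moreover have "f \<circ> d \<circ> (f \<circ> d) = f \<circ> d" "d \<circ> f \<circ> (d \<circ> f) = d \<circ> f"
    using Id0_idem[OF f] by (auto simp: fun_eq_iff)
  ultimately show ?thesis
    using Id0_bij_betw_range[OF f]
    by (simp add: q_map_zero Prj_def End_d_def end_mult_def comp_assoc)
qed

lemma prj_inv_q_map:
  assumes f: "f \<in> Id0 d"
  shows "prj_inv d (q_map d (0, f)) = f"
proof
  fix b
  have "f b \<in> range f" by simp
  then show "prj_inv d (q_map d (0, f)) b = f b"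
    unfolding prj_inv_def q_map_zero fst_conv snd_conv Id0_range_comp[OF f]
    using Id0_inj_on_range[OF f] by (simp add: the_inv_into_f_f)
qed

lemma Prj_D:
  assumes "(eA, eB) \<in> Prj d"
  shows "additive eA" "additive eB" "eB \<circ> d = d \<circ> eA" "eA \<circ> eA = eA" "eB \<circ> eB = eB"
    "inj_on d (range eA)" "d ` range eA = range eB"
  using assms by (auto simp: Prj_def End_d_def end_mult_def bij_betw_def)

lemma prj_inv_in_range:
  assumes "(eA, eB) \<in> Prj d"
  shows "prj_inv d (eA, eB) b \<in> range eA"
  using Prj_D[OF assms] by (simp add: prj_inv_def the_inv_into_into)

lemma comp_prj_inv:
  assumes "(eA, eB) \<in> Prj d"
  shows "d (prj_inv d (eA, eB) b) = eB b"
  using Prj_D[OF assms] by (simp add: prj_inv_def f_the_inv_into_f)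

lemma prj_inv_comp:
  assumes e: "(eA, eB) \<in> Prj d"
  shows "prj_inv d (eA, eB) (d a) = eA a"
proof -
  have "d (prj_inv d (eA, eB) (d a)) = d (eA a)"
    using comp_prj_inv[OF e] fun_cong[OF Prj_D(3)[OF e], of a] by simp
  then show ?thesis
    using inj_onD[OF Prj_D(6)[OF e]] prj_inv_in_range[OF e] by blast
qed

lemma additive_prj_inv:
  assumes "additive d" and e: "(eA, eB) \<in> Prj d"
  shows "additive (prj_inv d (eA, eB))"
proof
  let ?h = "prj_inv d (eA, eB)"
  fix x y
  have fix_range: "eA (?h z) = ?h z" for z
    using idem_fixes_range[OF Prj_D(4)[OF e] prj_inv_in_range[OF e]] .
  have "?h x + ?h y = eA (?h x + ?h y)"
    using fix_range additive.add[OF Prj_D(1)[OF e]] by simp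
  then have sum_in_range: "?h x + ?h y \<in> range eA"
    by (metis rangeI)
  have "d (?h (x + y)) = d (?h x + ?h y)"
    using comp_prj_inv[OF e] additive.add[OF Prj_D(2)[OF e]] additive.add[OF assms(1)]
    by simp
  then show "?h (x + y) = ?h x + ?h y"
    using inj_onD[OF Prj_D(6)[OF e] _ prj_inv_in_range[OF e] sum_in_range] by blast
qed

lemma prj_inv_in_Id0:
  assumes "additive d" and e: "(eA, eB) \<in> Prj d"
  shows "prj_inv d (eA, eB) \<in> Id0 d"
  using additive_prj_inv[OF assms] prj_inv_comp[OF e]
    idem_fixes_range[OF Prj_D(4)[OF e] prj_inv_in_range[OF e]]
  by (simp add: Id0_def fun_eq_iff)

lemma q_map_prj_inv:
  assumes "(eA, eB) \<in> Prj d"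
  shows "q_map d (0, prj_inv d (eA, eB)) = (eA, eB)"
  using prj_inv_comp[OF assms] comp_prj_inv[OF assms] by (simp add: q_map_zero fun_eq_iff)

lemma le_Id0_iff_le_Prj:
  assumes f: "f \<in> Id0 d"
  shows "le_Id0 d f g \<longleftrightarrow> le_Prj (q_map d (0, f)) (q_map d (0, g))"
proof -
  have "le_Id0 d f g \<longleftrightarrow> (\<forall>b. f (d (g b)) = f b) \<and> (\<forall>b. g (d (f b)) = f b)"
    by (auto simp: le_Id0_def Q_mult_zero fun_eq_iff)
  also have "\<dots> \<longleftrightarrow> (\<forall>a. f (d (g (d a))) = f (d a)) \<and> (\<forall>b. d (f (d (g b))) = d (f b))
      \<and> (\<forall>a. g (d (f (d a))) = f (d a)) \<and> (\<forall>b. d (g (d (f b))) = d (f b))"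
    \<comment> \<open>apply f on the left, resp. substitute a := f b, and use f d f = f\<close>
    using Id0_idem[OF f] by metis
  also have "\<dots> \<longleftrightarrow> le_Prj (q_map d (0, f)) (q_map d (0, g))"
    by (auto simp: le_Prj_def q_map_zero end_mult_def fun_eq_iff)
  finally show ?thesis .
qed

lemma q_map_act_Id0:
  assumes "is_aut_inv d (\<alpha>, \<beta>) (\<alpha>', \<beta>')"
  shows "q_map d (0, act_Id0 (\<alpha>, \<beta>) (\<alpha>', \<beta>') f) = act_Prj (\<alpha>, \<beta>) (\<alpha>', \<beta>') (q_map d (0, f))"
proof -
  have "\<beta> \<circ> d = d \<circ> \<alpha>" and "\<beta>' \<circ> d = d \<circ> \<alpha>'"
    using assms by (auto simp: is_aut_inv_def End_d_def)
  then show ?thesis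
    by (simp add: q_map_zero act_Id0_def act_Prj_def end_mult_def fun_eq_iff)
qed

theorem proposition4p6:
  fixes d :: "'a::ab_group_add \<Rightarrow> 'b::ab_group_add"
  assumes "additive d"
  shows "bij_betw (\<lambda>f. q_map d (0, f)) (Id0 d) (Prj d)
    \<and> (\<forall>f\<in>Id0 d. \<forall>g\<in>Id0 d. le_Id0 d f g \<longleftrightarrow> le_Prj (q_map d (0, f)) (q_map d (0, g)))
    \<and> (\<forall>u v. is_aut_inv d u v \<longrightarrow>
         (\<forall>f\<in>Id0 d. q_map d (0, act_Id0 u v f) = act_Prj u v (q_map d (0, f))))
    \<and> (\<forall>e\<in>Prj d. prj_inv d e \<in> Id0 d \<and> q_map d (0, prj_inv d e) = e)
    \<and> (\<forall>f\<in>Id0 d. prj_inv d (q_map d (0, f)) = f)"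
proof -
  have inverse: "\<forall>e\<in>Prj d. prj_inv d e \<in> Id0 d \<and> q_map d (0, prj_inv d e) = e"
    using prj_inv_in_Id0[OF assms] q_map_prj_inv by fast
  have left_inverse: "\<forall>f\<in>Id0 d. prj_inv d (q_map d (0, f)) = f"
    using prj_inv_q_map by blast
  have "bij_betw (\<lambda>f. q_map d (0, f)) (Id0 d) (Prj d)"
    using inverse left_inverse q_map_Id0_in_Prj[OF assms]
    by (intro bij_betw_byWitness[where f' = "prj_inv d"]) auto
  moreover have "\<forall>u v. is_aut_inv d u v \<longrightarrow>
      (\<forall>f\<in>Id0 d. q_map d (0, act_Id0 u v f) = act_Prj u v (q_map d (0, f)))"
    using q_map_act_Id0 by fast
  ultimately show ?thesis
    using le_Id0_iff_le_Prj inverse left_inverse by blast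
qed

end
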